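(* If $K\subseteq L\subseteq M$ are finite extensions inside $\bar K$, then $t_K(L)\mid t_K(M)$.
   Context: $K$ is a perfect field with a fixed algebraic closure $\bar K$. For a finite extension $P/K$, the ascending index $t_K(P)=[F:K]$, where $F$ is the unique subfield of $P$ that is Galois over $K$ of maximum possible degree. *)

theory Defs
  imports "HOL-Computational_Algebra.Primes" "HOL-Algebra.Algebraic_Closure" "HOL-Algebra.Finite_Extensions"
begin

text \<open>Conventions: the ambient structure R plays the role of the fixed algebraic
closure of K; all fields are subfields (carrier subsets) of R.\<close>

definition (in ring) perfect_subfield :: "'a set \<Rightarrow> bool" where
  "perfect_subfield K \<longleftrightarrow> subfield K R \<and>
     ((\<forall>n::nat. n > 0 \<longrightarrow> [n] \<cdot> \<one> \<noteq> \<zero>) \<or>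
      (\<exists>p::nat. Factorial_Ring.prime p \<and> [p] \<cdot> \<one> = \<zero> \<and> (\<forall>x\<in>K. \<exists>y\<in>K. y [^] p = x)))"

definition (in ring) galois_over :: "'a set \<Rightarrow> 'a set \<Rightarrow> bool" where
  "galois_over K F \<longleftrightarrow> subfield F R \<and> K \<subseteq> F \<and>
     (\<forall>x\<in>F. \<forall>y\<in>carrier R. eval (Irr K x) y = \<zero> \<longrightarrow> y \<in> F) \<and>
     (\<forall>x\<in>F. \<forall>y\<in>carrier R. alg_mult (Irr K x) y \<le> 1)"

text \<open>Ascending index t_K(P) = [F:K], F the maximal-degree subfield of P Galois
over K (unique, so the maximum of the degrees is its degree).\<close>
definition (in ring) ascending_index :: "'a set \<Rightarrow> 'a set \<Rightarrow> nat" where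
  "ascending_index K P = Max {dim K F | F. F \<subseteq> P \<and> galois_over K F}"

end

(*
  Let F_L <= L and F_M <= M be Galois subextensions of maximal degrees t_K(L) and t_K(M).
  Their compositum G lies in M and is again Galois over K. It is normal: a K-embedding of
  K(x) sending x to a conjugate y extends to G because R is algebraically closed, and it
  maps the generators of G, which lie in the normal fields F_L and F_M, back into G.
  It is separable because K is perfect: an irreducible polynomial g with a multiple root
  has derivative zero; in characteristic 0 this is absurd, and in characteristic p only
  powers X^(pj) occur in g, so taking p-th roots of the coefficients yields a polynomial h
  of smaller degree with h(x)^p = g(x) = 0, contradicting minimality.
  By maximality [G:K] = t_K(M), and as F_L <= G the tower law makes t_K(L) = [F_L:K]
  a divisor of [G:K].
*)

theory Submission
  imports Defs "HOL-Algebra.Multiplicative_Group"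
begin

section \<open>Polynomials given by their coefficients and the formal derivative\<close>

context ring
begin

text \<open>Coefficient lists start with the leading coefficient, hence the reversal.\<close>

definition poly_of_coeffs :: "nat \<Rightarrow> (nat \<Rightarrow> 'a) \<Rightarrow> 'a list"
  where "poly_of_coeffs n f = normalize (map f (rev [0..<n]))"

lemma coeff_map_rev_upt: "coeff (map f (rev [0..<n])) i = (if i < n then f i else \<zero>)"
  by (induction n) auto

lemma coeff_poly_of_coeffs: "coeff (poly_of_coeffs n f) i = (if i < n then f i else \<zero>)"
  unfolding poly_of_coeffs_def normalize_coeff[symmetric] by (rule coeff_map_rev_upt)

lemma length_poly_of_coeffs_le: "length (poly_of_coeffs n f) \<le> n"
  unfolding poly_of_coeffs_def using normalize_length_le[of "map f (rev [0..<n])"] by simp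

lemma poly_of_coeffs_polynomial:
  assumes "\<And>i. i < n \<Longrightarrow> f i \<in> K" shows "polynomial K (poly_of_coeffs n f)"
  unfolding poly_of_coeffs_def using assms by (intro normalize_gives_polynomial) auto

lemma coeff_in_subring:
  assumes "subring K R" "set p \<subseteq> K" shows "coeff p i \<in> K"
proof -
  have "coeff p i \<in> insert \<zero> (set p)" using coeff_img(3)[of p] by blast
  then show ?thesis using assms(2) subringE(2)[OF assms(1)] by auto
qed

lemma eval_eq_finsum:
  assumes p: "set p \<subseteq> carrier R" and x: "x \<in> carrier R" and n: "length p \<le> n"
  shows "eval p x = (\<Oplus>i\<in>{..<n}. coeff p i \<otimes> x [^] i)"
proof -
  have "eval p x = (\<Oplus>i\<in>{..<length p}. coeff p i \<otimes> x [^] i)"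
    using p
  proof (induction p)
    case (Cons c p)
    then have c: "c \<in> carrier R" and sp: "set p \<subseteq> carrier R" by auto
    have "(\<Oplus>i\<in>{..<length (c # p)}. coeff (c # p) i \<otimes> x [^] i)
        = c \<otimes> x [^] length p \<oplus> (\<Oplus>i\<in>{..<length p}. coeff p i \<otimes> x [^] i)"
      using c sp x by (simp add: lessThan_Suc finsum_insert) (intro finsum_cong', auto)
    with Cons.IH[OF sp] show ?case by simp
  qed simp
  also have "\<dots> = (\<Oplus>i\<in>{..<n}. coeff p i \<otimes> x [^] i)"
    by (rule add.finprod_mono_neutral_cong_left)
       (use n coeff_length[of p] coeff_in_carrier[OF p] x in auto)
  finally show ?thesis .
qed

lemma eval_poly_of_coeffs:
  assumes f: "\<And>i. i < n \<Longrightarrow> f i \<in> carrier R" and x: "x \<in> carrier R"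
  shows "eval (poly_of_coeffs n f) x = (\<Oplus>i\<in>{..<n}. f i \<otimes> x [^] i)"
proof -
  have "set (poly_of_coeffs n f) \<subseteq> carrier R"
    using polynomial_incl[OF poly_of_coeffs_polynomial[OF f]] .
  then have "eval (poly_of_coeffs n f) x = (\<Oplus>i\<in>{..<n}. coeff (poly_of_coeffs n f) i \<otimes> x [^] i)"
    using eval_eq_finsum x length_poly_of_coeffs_le by blast
  then show ?thesis
    unfolding coeff_poly_of_coeffs by (auto intro: finsum_cong' simp: f x)
qed

definition poly_deriv :: "'a list \<Rightarrow> 'a list"
  where "poly_deriv p = poly_of_coeffs (degree p) (\<lambda>i. [Suc i] \<cdot> coeff p (Suc i))"

lemma coeff_poly_deriv: "coeff (poly_deriv p) i = [Suc i] \<cdot> coeff p (Suc i)"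
  unfolding poly_deriv_def coeff_poly_of_coeffs using coeff_degree[of p "Suc i"] by auto

lemma length_poly_deriv_le: "length (poly_deriv p) \<le> degree p"
  unfolding poly_deriv_def by (rule length_poly_of_coeffs_le)

lemma poly_deriv_polynomial:
  assumes K: "subring K R" and p: "set p \<subseteq> K" shows "polynomial K (poly_deriv p)"
proof -
  have "[n] \<cdot> coeff p i \<in> K" for n :: nat and i
    using coeff_in_subring[OF K p] by (induction n) (auto simp: subringE(2,7)[OF K])
  then show ?thesis unfolding poly_deriv_def by (intro poly_of_coeffs_polynomial)
qed

lemma poly_deriv_in_carrier: "set p \<subseteq> carrier R \<Longrightarrow> set (poly_deriv p) \<subseteq> carrier R"
  using polynomial_incl[OF poly_deriv_polynomial[OF carrier_is_subring]] .

end

context domain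
begin

lemma coeff_poly_mult_linear:
  assumes a: "a \<in> carrier R" and q: "set q \<subseteq> carrier R"
  shows "coeff (poly_mult [\<one>, a] q) i = (if i = 0 then \<zero> else coeff q (i - 1)) \<oplus> a \<otimes> coeff q i"
proof -
  have split: "poly_mult [\<one>, a] q = poly_add (map (\<lambda>b. \<one> \<otimes> b) q @ [\<zero>]) (poly_mult [a] q)"
    by simp
  have s1: "set (map (\<lambda>b. \<one> \<otimes> b) q @ [\<zero>]) \<subseteq> carrier R" using q by auto
  have s2: "set (poly_mult [a] q) \<subseteq> carrier R" using poly_mult_in_carrier[of "[a]" q] a q by auto
  have c1: "coeff (map (\<lambda>b. \<one> \<otimes> b) q @ [\<zero>]) i = (if i = 0 then \<zero> else coeff q (i - 1))"
    unfolding append_coeff scalar_coeff[OF one_closed] using coeff_in_carrier[OF q] by auto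
  have c2: "coeff (poly_mult [a] q) i = a \<otimes> coeff q i"
    unfolding poly_mult_const'(1)[OF q a] using normalize_coeff scalar_coeff[OF a] by metis
  show ?thesis unfolding split poly_add_coeff[OF s1 s2] c1 c2 ..
qed

lemma poly_deriv_mult_linear:
  assumes a: "a \<in> carrier R" and q: "set q \<subseteq> carrier R"
  shows "poly_deriv (poly_mult [\<one>, a] q) = poly_add q (poly_mult [\<one>, a] (poly_deriv q))"
proof -
  have lin: "set [\<one>, a] \<subseteq> carrier R" using a by auto
  have lin_q: "set (poly_mult [\<one>, a] q) \<subseteq> carrier R" using poly_mult_in_carrier[OF lin q] .
  have dq: "set (poly_deriv q) \<subseteq> carrier R" using poly_deriv_in_carrier[OF q] .
  have lin_dq: "set (poly_mult [\<one>, a] (poly_deriv q)) \<subseteq> carrier R"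
    using poly_mult_in_carrier[OF lin dq] .
  have "coeff (poly_deriv (poly_mult [\<one>, a] q)) i
      = coeff (poly_add q (poly_mult [\<one>, a] (poly_deriv q))) i" for i
  proof -
    have ci: "coeff q i \<in> carrier R" "coeff q (Suc i) \<in> carrier R" using coeff_in_carrier[OF q] by auto
    have "[Suc i] \<cdot> coeff q i = coeff q i \<oplus> (if i = 0 then \<zero> else [i] \<cdot> coeff q i)"
      using ci by (cases i) (auto simp: add.nat_pow_Suc add.m_comm)
    moreover have "[Suc i] \<cdot> (a \<otimes> coeff q (Suc i)) = a \<otimes> ([Suc i] \<cdot> coeff q (Suc i))"
      using add_pow_rdistr[OF a ci(2)] by (simp del: add.nat_pow_Suc)
    ultimately have "[Suc i] \<cdot> (coeff q i \<oplus> a \<otimes> coeff q (Suc i))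
        = coeff q i \<oplus> ((if i = 0 then \<zero> else [i] \<cdot> coeff q i) \<oplus> a \<otimes> ([Suc i] \<cdot> coeff q (Suc i)))"
      using ci a by (simp add: add.nat_pow_distrib add.m_assoc del: add.nat_pow_Suc)
    then show ?thesis
      unfolding coeff_poly_deriv coeff_poly_mult_linear[OF a q] poly_add_coeff[OF q lin_dq]
        coeff_poly_mult_linear[OF a dq]
      by (cases i) (simp_all add: coeff_poly_deriv)
  qed
  moreover have "polynomial (carrier R) (poly_deriv (poly_mult [\<one>, a] q))"
    using poly_deriv_polynomial[OF carrier_is_subring lin_q] .
  moreover have "polynomial (carrier R) (poly_add q (poly_mult [\<one>, a] (poly_deriv q)))"
    using poly_add_is_polynomial[OF carrier_is_subring q lin_dq] .
  ultimately show ?thesis using coeff_iff_polynomial_cond by blast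
qed

lemma eval_poly_deriv_at_double_root:
  assumes y: "y \<in> carrier R" and g: "g \<in> carrier (poly_ring R)"
    and dvd: "([\<one>, \<ominus> y] [^]\<^bsub>poly_ring R\<^esub> (2::nat)) pdivides g"
  shows "eval (poly_deriv g) y = \<zero>"
proof -
  interpret UP: domain "poly_ring R" using univ_poly_is_domain[OF carrier_is_subring] .
  let ?lin = "[\<one>, \<ominus> y]"
  have lin: "?lin \<in> carrier (poly_ring R)"
    using y unfolding sym[OF univ_poly_carrier] polynomial_def by auto
  have lin_set: "set ?lin \<subseteq> carrier R" using y by auto
  obtain r where r: "r \<in> carrier (poly_ring R)" "g = (?lin [^]\<^bsub>poly_ring R\<^esub> (2::nat)) \<otimes>\<^bsub>poly_ring R\<^esub> r"
    using dvd unfolding pdivides_def factor_def by auto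
  define q where "q = ?lin \<otimes>\<^bsub>poly_ring R\<^esub> r"
  have "q \<in> carrier (poly_ring R)" unfolding q_def using lin r(1) by simp
  then have q: "set q \<subseteq> carrier R"
    using polynomial_incl unfolding sym[OF univ_poly_carrier] by blast
  have r_set: "set r \<subseteq> carrier R" using r(1) polynomial_incl unfolding sym[OF univ_poly_carrier] by auto
  have "?lin [^]\<^bsub>poly_ring R\<^esub> (2::nat) = ?lin \<otimes>\<^bsub>poly_ring R\<^esub> ?lin"
    using lin by (simp add: numeral_2_eq_2)
  then have "g = ?lin \<otimes>\<^bsub>poly_ring R\<^esub> q"
    using r lin UP.m_assoc unfolding q_def by simp
  then have g_eq: "g = poly_mult ?lin q"
    unfolding univ_poly_mult .
  have lin_root: "eval ?lin y = \<zero>" using y by (simp, algebra)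
  have q_root: "eval q y = \<zero>" unfolding q_def univ_poly_mult
    using eval_poly_mult[OF lin_set r_set y] lin_root eval_in_carrier[OF r_set y] by simp
  have dq: "set (poly_deriv q) \<subseteq> carrier R" using poly_deriv_in_carrier[OF q] .
  have "eval (poly_deriv g) y = eval q y \<oplus> eval (poly_mult ?lin (poly_deriv q)) y"
    unfolding g_eq poly_deriv_mult_linear[OF add.inv_closed[OF y] q]
    using eval_poly_add[OF q poly_mult_in_carrier[OF lin_set dq] y] .
  also have "\<dots> = \<zero>"
    using q_root eval_poly_mult[OF lin_set dq y] lin_root eval_in_carrier[OF dq y] by simp
  finally show ?thesis .
qed

lemma coeff_eq_zero_if_poly_deriv_eq_Nil:
  assumes g: "set g \<subseteq> carrier R" and deriv: "poly_deriv g = []" and n: "[n] \<cdot> \<one> \<noteq> \<zero>"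
  shows "coeff g n = \<zero>"
proof -
  obtain i where i: "n = Suc i" using n by (cases n) auto
  have "[n] \<cdot> coeff g n = \<zero>"
    using coeff_poly_deriv[of g i] deriv i by (simp del: add.nat_pow_Suc)
  then have "([n] \<cdot> \<one>) \<otimes> coeff g n = \<zero>"
    using add_pow_ldistr[OF one_closed coeff_in_carrier[OF g]] coeff_in_carrier[OF g] by simp
  then show ?thesis using n coeff_in_carrier[OF g] integral_iff by auto
qed

end

section \<open>Characteristic \<open>p\<close> and the Frobenius map\<close>

context cring
begin

lemma binomial_expansion:
  assumes a: "a \<in> carrier R" and b: "b \<in> carrier R"
  shows "(a \<oplus> b) [^] n = (\<Oplus>k\<in>{..n}. [(n choose k)] \<cdot> (a [^] k \<otimes> b [^] (n - k)))"
proof (induction n)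
  case 0
  then show ?case using a b by simp
next
  case (Suc n)
  define c where "c k = a [^] k \<otimes> b [^] (Suc n - k)" for k
  have c: "c k \<in> carrier R" for k unfolding c_def using a b by simp
  have times_a: "(\<Oplus>k\<in>{..n}. [(n choose k)] \<cdot> (a [^] k \<otimes> b [^] (n - k))) \<otimes> a
      = (\<Oplus>k\<in>{..n}. [(n choose k)] \<cdot> c (Suc k))"
    using a b by (subst finsum_ldistr)
      (auto intro!: finsum_cong' simp: add_pow_ldistr add_pow_rdistr c_def m_ac simp del: finsum_Suc)
  have "b [^] (n - k) \<otimes> b = b [^] (Suc n - k)" if "k \<le> n" for k
    using that b by (simp add: Suc_diff_le)
  then have times_b: "(\<Oplus>k\<in>{..n}. [(n choose k)] \<cdot> (a [^] k \<otimes> b [^] (n - k))) \<otimes> b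
      = (\<Oplus>k\<in>{..n}. [(n choose k)] \<cdot> c k)"
    using a b by (subst finsum_ldistr)
      (auto intro!: finsum_cong' simp: add_pow_ldistr c_def m_assoc simp del: finsum_Suc)
  define B where "B = (\<Oplus>k\<in>{..n}. [(n choose Suc k)] \<cdot> c (Suc k))"
  have B: "B \<in> carrier R" unfolding B_def using c by simp
  have "(\<Oplus>k\<in>{..n}. [(n choose k)] \<cdot> c k) = (\<Oplus>k\<in>{..Suc n}. [(n choose k)] \<cdot> c k)"
    using c by (simp add: binomial_eq_0)
  also have "\<dots> = B \<oplus> c 0"
    unfolding B_def using c by (subst finsum_Suc2) auto
  finally have low: "(\<Oplus>k\<in>{..n}. [(n choose k)] \<cdot> c k) = B \<oplus> c 0" .
  have "(\<Oplus>k\<in>{..Suc n}. [(Suc n choose k)] \<cdot> c k)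
      = (\<Oplus>k\<in>{..n}. [(n choose k)] \<cdot> c (Suc k) \<oplus> [(n choose Suc k)] \<cdot> c (Suc k)) \<oplus> c 0"
    using c by (subst finsum_Suc2) (auto intro!: finsum_cong' simp: add.nat_pow_mult simp del: finsum_Suc)
  also have "\<dots> = (\<Oplus>k\<in>{..n}. [(n choose k)] \<cdot> c (Suc k)) \<oplus> (B \<oplus> c 0)"
    unfolding B_def using c by (simp add: a_assoc)
  finally have pascal: "(\<Oplus>k\<in>{..Suc n}. [(Suc n choose k)] \<cdot> c k)
      = (\<Oplus>k\<in>{..n}. [(n choose k)] \<cdot> c (Suc k)) \<oplus> (\<Oplus>k\<in>{..n}. [(n choose k)] \<cdot> c k)"
    unfolding low .
  have "(a \<oplus> b) [^] Suc n
      = (\<Oplus>k\<in>{..n}. [(n choose k)] \<cdot> (a [^] k \<otimes> b [^] (n - k))) \<otimes> a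
        \<oplus> (\<Oplus>k\<in>{..n}. [(n choose k)] \<cdot> (a [^] k \<otimes> b [^] (n - k))) \<otimes> b"
    using Suc.IH a b by (simp add: r_distr del: finsum_Suc)
  also have "\<dots> = (\<Oplus>k\<in>{..Suc n}. [(Suc n choose k)] \<cdot> c k)"
    unfolding times_a times_b pascal ..
  finally show ?case unfolding c_def .
qed

lemma frobenius_add:
  assumes p: "Factorial_Ring.prime (p::nat)" and char: "[p] \<cdot> \<one> = \<zero>"
    and a: "a \<in> carrier R" and b: "b \<in> carrier R"
  shows "(a \<oplus> b) [^] p = a [^] p \<oplus> b [^] p"
proof -
  define t where "t k = [(p choose k)] \<cdot> (a [^] k \<otimes> b [^] (p - k))" for k
  have t: "t k \<in> carrier R" for k unfolding t_def using a b by simp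
  have middle: "t k = \<zero>" if k: "0 < k" "k < p" for k
  proof -
    obtain m where m: "p choose k = p * m"
      using dvd_choose_prime[OF k(2) _ _ p] k by (auto elim: dvdE)
    have "t k = [m] \<cdot> (([p] \<cdot> \<one>) \<otimes> (a [^] k \<otimes> b [^] (p - k)))"
      unfolding t_def m using a b by (simp add: add.nat_pow_pow[symmetric] add_pow_ldistr)
    then show ?thesis using char a b by simp
  qed
  have "(a \<oplus> b) [^] p = (\<Oplus>k\<in>{..p}. t k)"
    unfolding t_def using binomial_expansion[OF a b] .
  also have "\<dots> = (\<Oplus>k\<in>{0, p}. t k)"
    by (rule add.finprod_mono_neutral_cong_right) (use middle t in auto)
  also have "\<dots> = b [^] p \<oplus> a [^] p"
    using prime_gt_0_nat[OF p] t a b by (simp add: t_def finsum_insert)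
  finally show ?thesis using a b by (simp add: a_comm)
qed

lemma frobenius_finsum:
  assumes p: "Factorial_Ring.prime (p::nat)" and char: "[p] \<cdot> \<one> = \<zero>"
    and A: "finite A" and f: "f \<in> A \<rightarrow> carrier R"
  shows "(\<Oplus>i\<in>A. f i) [^] p = (\<Oplus>i\<in>A. f i [^] p)"
  using A f
proof (induction A rule: finite_induct)
  case empty
  then show ?case using prime_gt_0_nat[OF p] by (simp add: nat_pow_zero)
next
  case (insert x A)
  then show ?case
    by (simp add: finsum_insert frobenius_add[OF p char] finsum_closed Pi_def)
qed

end

context domain
begin

lemma add_pow_one_eq_zero_iff_dvd:
  assumes p: "Factorial_Ring.prime (p::nat)" and char: "[p] \<cdot> \<one> = \<zero>"
  shows "[n] \<cdot> \<one> = \<zero> \<longleftrightarrow> p dvd n"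
proof -
  have "add.ord \<one> dvd p" using add.pow_eq_id[of \<one> p] char by simp
  moreover have "add.ord \<one> \<noteq> 1" using add.pow_eq_id[of \<one> 1] by auto
  ultimately have "add.ord \<one> = p" using p by (auto simp: prime_nat_iff)
  then show ?thesis using add.pow_eq_id[of \<one> n] by simp
qed

lemma nat_pow_eq_zeroD:
  assumes "a \<in> carrier R" and "a [^] (n::nat) = \<zero>" shows "a = \<zero>"
  using assms(2) by (induction n) (auto simp: integral_iff assms(1))

end

context cring
begin

lemma eval_poly_of_pth_roots:
  assumes p: "Factorial_Ring.prime (p::nat)" and char: "[p] \<cdot> \<one> = \<zero>"
    and g: "set g \<subseteq> carrier R" "length g \<le> Suc (p * m)"
    and sparse: "\<And>i. \<not> p dvd i \<Longrightarrow> coeff g i = \<zero>"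
    and d: "\<And>j. d j \<in> carrier R" "\<And>j. d j [^] p = coeff g (p * j)"
    and x: "x \<in> carrier R"
  shows "eval (poly_of_coeffs (Suc m) d) x [^] p = eval g x"
proof -
  have "eval (poly_of_coeffs (Suc m) d) x [^] p = (\<Oplus>j\<in>{..<Suc m}. (d j \<otimes> x [^] j) [^] p)"
    using eval_poly_of_coeffs[OF d(1) x] frobenius_finsum[OF p char, of "{..<Suc m}" "\<lambda>j. d j \<otimes> x [^] j"]
      d(1) x by simp
  also have "\<dots> = (\<Oplus>j\<in>{..<Suc m}. coeff g (p * j) \<otimes> x [^] (p * j))"
    using d x g(1) by (intro finsum_cong') (auto simp: nat_pow_distrib nat_pow_pow mult.commute)
  also have "\<dots> = (\<Oplus>i\<in>(\<lambda>j. p * j) ` {..<Suc m}. coeff g i \<otimes> x [^] i)"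
    using prime_gt_0_nat[OF p] g(1) x by (subst finsum_reindex) (auto simp: inj_on_def)
  also have "\<dots> = (\<Oplus>i\<in>{..<Suc (p * m)}. coeff g i \<otimes> x [^] i)"
  proof (rule add.finprod_mono_neutral_cong_left)
    show "(\<lambda>j. p * j) ` {..<Suc m} \<subseteq> {..<Suc (p * m)}" by (auto simp: less_Suc_eq_le)
  next
    fix i assume i: "i \<in> {..<Suc (p * m)} - (\<lambda>j. p * j) ` {..<Suc m}"
    have "\<not> p dvd i"
    proof
      assume "p dvd i"
      then obtain j where j: "i = p * j" by blast
      with i have "p * j < Suc (p * m)" by simp
      then have "j \<le> m" using prime_gt_0_nat[OF p] by (simp add: less_Suc_eq_le)
      with i j show False by (auto simp: less_Suc_eq_le)
    qed
    then show "coeff g i \<otimes> x [^] i = \<zero>" using sparse x by simp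
  qed (use g(1) x in auto)
  also have "\<dots> = eval g x"
    using eval_eq_finsum[OF g(1) x g(2)] by simp
  finally show ?thesis .
qed

end

section \<open>Separability over perfect fields\<close>

lemma (in ring) perfect_subfield_imp_subfield: "perfect_subfield K \<Longrightarrow> subfield K R"
  by (simp add: perfect_subfield_def)

context domain
begin

lemma Irr_eqI:
  assumes K: "subfield K R" and y: "y \<in> carrier R"
    and p: "p \<in> carrier (K[X])" "pirreducible K p" "lead_coeff p = \<one>" "eval p y = \<zero>"
  shows "Irr K y = p"
proof -
  have "p \<noteq> []" using pirreducibleE(1)[OF subfieldE(1)[OF K] p(1,2)] .
  then have alg: "(algebraic over K) y" using algebraicI[OF p(1) _ p(4)] by blast
  show ?thesis
    using minimal_polynomial_is_unique[OF K y alg] IrrE[OF K y alg] p by metis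
qed

lemma set_Irr_subset:
  assumes "subfield K R" and "x \<in> carrier R" and "(algebraic over K) x"
  shows "set (Irr K x) \<subseteq> K"
  using IrrE(1)[OF assms] polynomial_incl unfolding sym[OF univ_poly_carrier] by blast

lemma coeff_Irr_degree:
  assumes K: "subfield K R" and x: "x \<in> carrier R" "(algebraic over K) x"
  shows "coeff (Irr K x) (degree (Irr K x)) = \<one>"
proof -
  have "Irr K x \<noteq> []" using pirreducibleE(1)[OF subfieldE(1)[OF K] IrrE(1,2)[OF K x]] .
  then show ?thesis using IrrE(3)[OF K x] lead_coeff_simp by metis
qed

lemma degree_Irr_le:
  assumes K: "subfield K R" and x: "x \<in> carrier R" "(algebraic over K) x"
    and p: "p \<in> carrier (K[X])" "p \<noteq> []" "eval p x = \<zero>"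
  shows "degree (Irr K x) \<le> degree p"
  using pdivides_imp_degree_le[OF subfieldE(1)[OF K] IrrE(1)[OF K x] p(1,2)] Irr_minimal[OF K x p(1,3)]
  by blast

lemma Irr_multiple_root_imp_poly_deriv_eq_Nil:
  assumes K: "subfield K R" and x: "x \<in> carrier R" and alg: "(algebraic over K) x"
    and mult: "2 \<le> alg_mult (Irr K x) y"
  shows "poly_deriv (Irr K x) = []"
proof (rule ccontr)
  let ?g = "Irr K x"
  assume nonzero: "poly_deriv ?g \<noteq> []"
  note Irr = IrrE[OF K x alg]
  have subring: "subring K R" using subfieldE(1)[OF K] .
  have g_K: "set ?g \<subseteq> K" using set_Irr_subset[OF K x alg] .
  have g_R: "?g \<in> carrier (poly_ring R)"
    using carrier_polynomial[OF subring] Irr(1) unfolding sym[OF univ_poly_carrier] by blast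
  have y: "y \<in> carrier R" using mult unfolding alg_mult_def by (auto split: if_splits)
  have deriv_root: "eval (poly_deriv ?g) y = \<zero>"
    using eval_poly_deriv_at_double_root[OF y g_R le_alg_mult_imp_pdivides[OF y g_R mult]] .
  have "0 < alg_mult ?g y" using mult by linarith
  then have "is_root ?g y" using alg_mult_gt_zero_iff_is_root[OF g_R] by blast
  then have Irr_y: "Irr K y = ?g" using Irr_eqI[OF K y Irr(1-3)] unfolding is_root_def by blast
  have deriv_K: "poly_deriv ?g \<in> carrier (K[X])"
    using poly_deriv_polynomial[OF subring g_K] univ_poly_carrier by blast
  have "degree ?g \<le> degree (poly_deriv ?g)"
    using degree_Irr_le[OF K y _ deriv_K nonzero deriv_root] Irr_y
      algebraicI[OF deriv_K nonzero deriv_root] by simp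
  moreover have "length (poly_deriv ?g) \<le> degree ?g" by (rule length_poly_deriv_le)
  ultimately show False using nonzero by (cases "poly_deriv ?g") auto
qed

end

context field
begin

lemma Irr_has_coeff_off_multiples:
  assumes K: "subfield K R" and p: "Factorial_Ring.prime (p::nat)" and char: "[p] \<cdot> \<one> = \<zero>"
    and roots: "\<forall>z\<in>K. \<exists>w\<in>K. w [^] p = z"
    and x: "x \<in> carrier R" and alg: "(algebraic over K) x"
  obtains i where "\<not> p dvd i" "coeff (Irr K x) i \<noteq> \<zero>"
proof (rule ccontr)
  let ?g = "Irr K x"
  assume "\<not> thesis"
  with that have sparse: "\<And>i. \<not> p dvd i \<Longrightarrow> coeff ?g i = \<zero>" by blast
  note Irr = IrrE[OF K x alg]
  have subring: "subring K R" using subfieldE(1)[OF K] .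
  have g_K: "set ?g \<subseteq> K" using set_Irr_subset[OF K x alg] .
  have g_R: "set ?g \<subseteq> carrier R" using g_K subfieldE(3)[OF K] by blast
  define n where "n = degree ?g"
  have lead: "coeff ?g n = \<one>" unfolding n_def using coeff_Irr_degree[OF K x alg] .
  then have length: "length ?g = Suc n" unfolding n_def by (cases "?g = []") auto
  have "p dvd n" using sparse[of n] lead one_not_zero by auto
  then obtain m where nm: "n = p * m" by (elim dvdE)
  have "n \<ge> 1" unfolding n_def using pirreducible_degree[OF K Irr(1,2)] .
  then have "m \<noteq> 0" using nm by auto
  moreover have "2 * m \<le> p * m" using prime_ge_2_nat[OF p] by simp
  ultimately have m_less: "m < n" using nm by linarith
  have "\<forall>j. \<exists>w. w \<in> K \<and> w [^] p = coeff ?g (p * j)"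
    using roots coeff_in_subring[OF subring g_K] by blast
  then obtain d where d: "\<And>j. d j \<in> K" "\<And>j. d j [^] p = coeff ?g (p * j)"
    using choice[of "\<lambda>j w. w \<in> K \<and> w [^] p = coeff ?g (p * j)"] by blast
  have d_R: "d j \<in> carrier R" for j using d(1) subfieldE(3)[OF K] by blast
  txt \<open>Coefficientwise \<open>h\<^sup>p = g\<close>, so \<open>h(x)\<^sup>p = g(x) = 0\<close> by the Frobenius map, while
    \<open>deg h = deg g / p\<close> contradicts the minimality of \<open>g\<close>.\<close>
  define h where "h = poly_of_coeffs (Suc m) d"
  have h_K: "h \<in> carrier (K[X])"
    unfolding h_def univ_poly_carrier[symmetric] using d(1) by (intro poly_of_coeffs_polynomial)
  have "d m \<noteq> \<zero>"
    using d(2)[of m] lead nm prime_gt_0_nat[OF p] by (auto simp: nat_pow_zero)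
  then have h_nonzero: "h \<noteq> []" using coeff_poly_of_coeffs[of "Suc m" d m] unfolding h_def by auto
  have "eval h x [^] p = \<zero>"
    using eval_poly_of_pth_roots[OF p char g_R _ sparse d_R d(2) x] length nm Irr(4)
    unfolding h_def by simp
  moreover have "set h \<subseteq> carrier R" unfolding h_def
    using polynomial_incl[OF poly_of_coeffs_polynomial] d_R by blast
  ultimately have "eval h x = \<zero>" using nat_pow_eq_zeroD eval_in_carrier x by blast
  then have "degree ?g \<le> degree h" using degree_Irr_le[OF K x alg h_K h_nonzero] by blast
  moreover have "length h \<le> Suc m" unfolding h_def by (rule length_poly_of_coeffs_le)
  ultimately show False using m_less unfolding n_def by simp
qed

lemma Irr_poly_deriv_neq_Nil:
  assumes perfect: "perfect_subfield K" and x: "x \<in> carrier R" and alg: "(algebraic over K) x"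
  shows "poly_deriv (Irr K x) \<noteq> []"
proof
  let ?g = "Irr K x"
  assume deriv: "poly_deriv ?g = []"
  have K: "subfield K R" using perfect_subfield_imp_subfield[OF perfect] .
  note Irr = IrrE[OF K x alg]
  have g_R: "set ?g \<subseteq> carrier R" using set_Irr_subset[OF K x alg] subfieldE(3)[OF K] by blast
  have coeff_zero: "coeff ?g n = \<zero>" if "[n] \<cdot> \<one> \<noteq> \<zero>" for n
    using coeff_eq_zero_if_poly_deriv_eq_Nil[OF g_R deriv that] .
  from perfect consider "\<forall>n::nat. n > 0 \<longrightarrow> [n] \<cdot> \<one> \<noteq> \<zero>"
    | p :: nat where "Factorial_Ring.prime p" "[p] \<cdot> \<one> = \<zero>" "\<forall>z\<in>K. \<exists>w\<in>K. w [^] p = z"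
    unfolding perfect_subfield_def by blast
  then show False
  proof cases
    case 1
    have "coeff ?g (degree ?g) = \<one>" using coeff_Irr_degree[OF K x alg] .
    moreover have "degree ?g > 0" using pirreducible_degree[OF K Irr(1,2)] by simp
    ultimately show False using coeff_zero 1 by auto
  next
    case (2 p)
    then obtain i where "\<not> p dvd i" "coeff ?g i \<noteq> \<zero>"
      using Irr_has_coeff_off_multiples[OF K _ _ _ x alg] by blast
    then show False using coeff_zero add_pow_one_eq_zero_iff_dvd[OF 2(1,2)] by blast
  qed
qed

theorem Irr_separable_if_perfect:
  assumes "perfect_subfield K" and "x \<in> carrier R" and "(algebraic over K) x"
  shows "alg_mult (Irr K x) y \<le> 1"
proof (rule ccontr)
  assume "\<not> alg_mult (Irr K x) y \<le> 1"
  then have "2 \<le> alg_mult (Irr K x) y" by simp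
  moreover have "subfield K R" using perfect_subfield_imp_subfield[OF assms(1)] .
  ultimately show False
    using Irr_multiple_root_imp_poly_deriv_eq_Nil Irr_poly_deriv_neq_Nil[OF assms] assms(2,3) by blast
qed

end

section \<open>Degrees in towers\<close>

context ring
begin

lemma subring_imp_subalgebra: "subring V R \<Longrightarrow> K \<subseteq> V \<Longrightarrow> subalgebra K V R"
  unfolding subalgebra_def subalgebra_axioms_def by (auto simp: subringE subring_def)

lemma dim_tower:
  assumes K: "subfield K R" and F: "subfield F R" and E: "subring E R"
    and KF: "K \<subseteq> F" and FE: "F \<subseteq> E" and fd: "finite_dimension K E"
  shows "finite_dimension K F" "finite_dimension F E" "dim K E = dim K F * dim F E"
proof -
  show fd_F: "finite_dimension K F"
    using subalbegra_incl_imp_finite_dimension[OF K fd subring_imp_subalgebra[OF subfieldE(1)[OF F] KF] FE] .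
  obtain Vs where Vs: "set Vs \<subseteq> carrier R" "Span K Vs = E"
    using exists_base[OF K finite_dimensionE[OF K fd]] by auto
  have "Span F Vs \<subseteq> E"
    using subalgebra_Span_incl[OF F subring_imp_subalgebra[OF E FE]] Span_base_incl[OF K Vs(1)] Vs(2)
    by auto
  moreover have "subalgebra K (Span F Vs) R"
    using Span_is_subalgebra[OF F Vs(1)] KF unfolding subalgebra_def subalgebra_axioms_def by auto
  then have "E \<subseteq> Span F Vs"
    using subalgebra_Span_incl[OF K _ Span_base_incl[OF F Vs(1)]] Vs(2) by auto
  ultimately have "Span F Vs = E" by auto
  then show fd_E: "finite_dimension F E"
    using Span_finite_dimension[OF F Vs(1)] by simp
  show "dim K E = dim K F * dim F E"
    using telescopic_base_dim(2)[OF K F fd_F fd_E] unfolding over_def .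
qed

lemma finite_dimension_generators:
  assumes K: "subfield K R" and fd: "finite_dimension K F"
  obtains us where "set us \<subseteq> F" and "\<And>G. subring G R \<Longrightarrow> K \<subseteq> G \<Longrightarrow> set us \<subseteq> G \<Longrightarrow> F \<subseteq> G"
proof -
  obtain us where us: "set us \<subseteq> carrier R" "Span K us = F"
    using exists_base[OF K finite_dimensionE[OF K fd]] by blast
  show thesis
  proof (rule that)
    show "set us \<subseteq> F" using Span_base_incl[OF K us(1)] us(2) by simp
    show "F \<subseteq> G" if "subring G R" "K \<subseteq> G" "set us \<subseteq> G" for G
      using subalgebra_Span_incl[OF K subring_imp_subalgebra[OF that(1,2)] that(3)] us(2) by simp
  qed
qed

end

context domain
begin

lemma dim_pos:
  assumes K: "subfield K R" and E: "subring E R" and fd: "finite_dimension K E"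
  shows "dim K E > 0"
proof (rule ccontr)
  assume "\<not> dim K E > 0"
  then have "dimension 0 K E" using finite_dimensionE[OF K fd] unfolding over_def by simp
  then have "E = {\<zero>}" using dimension_zero[OF K] by blast
  then show False using subringE(3)[OF E] one_not_zero by blast
qed

lemma dim_mono:
  assumes K: "subfield K R" and F: "subfield F R" and E: "subring E R"
    and KF: "K \<subseteq> F" and FE: "F \<subseteq> E" and fd: "finite_dimension K E"
  shows "dim K F \<le> dim K E"
  using dim_tower[OF assms] dim_pos[OF F E] by simp

end

section \<open>Extending embeddings into an algebraic closure\<close>

lemma ring_hom_factor_through:
  assumes A: "ring A" and B: "ring B" and C: "ring C"
    and f: "f \<in> ring_hom A B" and g: "g \<in> ring_hom A C"
    and ker: "\<And>a. a \<in> carrier A \<Longrightarrow> f a = \<zero>\<^bsub>B\<^esub> \<Longrightarrow> g a = \<zero>\<^bsub>C\<^esub>"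
  obtains h where "h \<in> ring_hom (B\<lparr>carrier := f ` carrier A\<rparr>) C"
    and "\<And>a. a \<in> carrier A \<Longrightarrow> h (f a) = g a"
proof -
  interpret f: ring_hom_ring A B f using ring_hom_ringI2[OF A B f] .
  interpret g: ring_hom_ring A C g using ring_hom_ringI2[OF A C g] .
  have well_defined: "g a = g b" if ab: "a \<in> carrier A" "b \<in> carrier A" "f a = f b" for a b
  proof -
    have diff: "a \<ominus>\<^bsub>A\<^esub> b \<in> carrier A" using ab by simp
    have "f (a \<ominus>\<^bsub>A\<^esub> b) = \<zero>\<^bsub>B\<^esub>"
      using ab by (simp add: a_minus_def f.S.r_neg)
    then have "g (a \<ominus>\<^bsub>A\<^esub> b) = \<zero>\<^bsub>C\<^esub>" using ker diff by blast
    then have "g a \<ominus>\<^bsub>C\<^esub> g b = \<zero>\<^bsub>C\<^esub>" using ab by (simp add: a_minus_def)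
    then show ?thesis using ab by (simp add: g.S.r_right_minus_eq)
  qed
  define h where "h z = g (SOME a. a \<in> carrier A \<and> f a = z)" for z
  have h_f: "h (f a) = g a" if a: "a \<in> carrier A" for a
  proof -
    have "\<exists>b. b \<in> carrier A \<and> f b = f a" using a by blast
    then have "(SOME b. b \<in> carrier A \<and> f b = f a) \<in> carrier A \<and> f (SOME b. b \<in> carrier A \<and> f b = f a) = f a"
      by (rule someI_ex)
    then show ?thesis unfolding h_def using well_defined a by blast
  qed
  have "h \<in> ring_hom (B\<lparr>carrier := f ` carrier A\<rparr>) C"
  proof (rule ring_hom_memI)
    show "h z \<in> carrier C" if "z \<in> carrier (B\<lparr>carrier := f ` carrier A\<rparr>)" for z
      using that h_f by auto
    show "h (z \<otimes>\<^bsub>B\<lparr>carrier := f ` carrier A\<rparr>\<^esub> w) = h z \<otimes>\<^bsub>C\<^esub> h w"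
      and "h (z \<oplus>\<^bsub>B\<lparr>carrier := f ` carrier A\<rparr>\<^esub> w) = h z \<oplus>\<^bsub>C\<^esub> h w"
      if "z \<in> carrier (B\<lparr>carrier := f ` carrier A\<rparr>)" "w \<in> carrier (B\<lparr>carrier := f ` carrier A\<rparr>)" for z w
      using that by (auto simp: h_f simp flip: f.hom_mult f.hom_add)
    show "h \<one>\<^bsub>B\<lparr>carrier := f ` carrier A\<rparr>\<^esub> = \<one>\<^bsub>C\<^esub>"
      using h_f[of "\<one>\<^bsub>A\<^esub>"] by simp
  qed
  with h_f that show thesis by blast
qed

context domain
begin

lemma eval_map_ring_hom:
  assumes E: "subring E R" and hs: "hs \<in> ring_hom (R\<lparr>carrier := E\<rparr>) R" and b: "b \<in> carrier R"
  shows "(\<lambda>p. eval (map hs p) b) \<in> ring_hom (E[X]) R"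
proof -
  interpret hs: ring_hom_ring "R\<lparr>carrier := E\<rparr>" R hs
    using ring_hom_ringI2[OF subring_is_ring[OF E] ring_axioms hs] .
  interpret UP: domain "E[X]" using univ_poly_is_domain[OF E] .
  have coeffs: "set p \<subseteq> E" if "p \<in> carrier (E[X])" for p
    using that polynomial_incl unfolding sym[OF univ_poly_carrier] by blast
  have mapped: "set (map hs p) \<subseteq> carrier R" if "p \<in> carrier (E[X])" for p
    using coeffs[OF that] hs.hom_closed by auto
  show ?thesis
  proof (rule ring_hom_memI)
    fix p q assume p: "p \<in> carrier (E[X])" and q: "q \<in> carrier (E[X])"
    have "eval (map hs (p \<otimes>\<^bsub>E[X]\<^esub> q)) b = eval (normalize (map hs (poly_mult p q))) b"
      using eval_normalize[OF mapped[OF UP.m_closed[OF p q], unfolded univ_poly_mult] b]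
      unfolding univ_poly_mult by simp
    also have "\<dots> = eval (poly_mult (map hs p) (map hs q)) b"
      using hs.poly_mult_hom'[of p q] coeffs[OF p] coeffs[OF q] poly_mult_consistent[OF E] by simp
    finally show "eval (map hs (p \<otimes>\<^bsub>E[X]\<^esub> q)) b = eval (map hs p) b \<otimes> eval (map hs q) b"
      using eval_poly_mult[OF mapped[OF p] mapped[OF q] b] by simp
    have "eval (map hs (p \<oplus>\<^bsub>E[X]\<^esub> q)) b = eval (normalize (map hs (poly_add p q))) b"
      using eval_normalize[OF mapped[OF UP.a_closed[OF p q], unfolded univ_poly_add] b]
      unfolding univ_poly_add by simp
    also have "\<dots> = eval (poly_add (map hs p) (map hs q)) b"
      using hs.poly_add_hom'[of p q] coeffs[OF p] coeffs[OF q] poly_add_consistent[OF E] by simp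
    finally show "eval (map hs (p \<oplus>\<^bsub>E[X]\<^esub> q)) b = eval (map hs p) b \<oplus> eval (map hs q) b"
      using eval_poly_add[OF mapped[OF p] mapped[OF q] b] by simp
  qed (use eval_in_carrier mapped b hs.hom_one in \<open>auto simp: univ_poly_one\<close>)
qed

lemma eval_map_eq_zero_if_Irr_root:
  assumes E: "subfield E R" and hs: "hs \<in> ring_hom (R\<lparr>carrier := E\<rparr>) R"
    and a: "a \<in> carrier R" "(algebraic over E) a"
    and b: "b \<in> carrier R" "eval (map hs (Irr E a)) b = \<zero>"
    and p: "p \<in> carrier (E[X])" "eval p a = \<zero>"
  shows "eval (map hs p) b = \<zero>"
proof -
  have Irr: "Irr E a \<in> carrier (E[X])" using IrrE(1)[OF E a] .
  have "Irr E a divides\<^bsub>E[X]\<^esub> p"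
    using Irr_minimal[OF E a p] pdivides_iff_shell[OF E Irr p(1)] by simp
  then obtain q where q: "q \<in> carrier (E[X])" "p = Irr E a \<otimes>\<^bsub>E[X]\<^esub> q"
    unfolding factor_def by blast
  have "eval (map hs p) b = eval (map hs (Irr E a)) b \<otimes> eval (map hs q) b"
    using ring_hom_mult[OF eval_map_ring_hom[OF subfieldE(1)[OF E] hs b(1)] Irr q(1)] q(2) by simp
  then show ?thesis
    using b(2) ring_hom_closed[OF eval_map_ring_hom[OF subfieldE(1)[OF E] hs b(1)] q(1)] by simp
qed

lemma simple_extension_hom_extend:
  assumes E: "subfield E R" and hs: "hs \<in> ring_hom (R\<lparr>carrier := E\<rparr>) R"
    and a: "a \<in> carrier R" "(algebraic over E) a"
    and b: "b \<in> carrier R" "eval (map hs (Irr E a)) b = \<zero>"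
  obtains ht where "ht \<in> ring_hom (R\<lparr>carrier := simple_extension E a\<rparr>) R"
    and "\<And>x. x \<in> E \<Longrightarrow> ht x = hs x" and "ht a = b"
proof -
  have subring: "subring E R" using subfieldE(1)[OF E] .
  interpret hs: ring_hom_ring "R\<lparr>carrier := E\<rparr>" R hs
    using ring_hom_ringI2[OF subring_is_ring[OF subring] ring_axioms hs] .
  interpret UP: domain "E[X]" using univ_poly_is_domain[OF subring] .
  have eval_a: "(\<lambda>p. eval p a) \<in> ring_hom (E[X]) R"
    using ring_hom_ring.homh[OF eval_ring_hom[OF subring a(1)]] .
  obtain ht where ht: "ht \<in> ring_hom (R\<lparr>carrier := (\<lambda>p. eval p a) ` carrier (E[X])\<rparr>) R"
    and ht_eval: "\<And>p. p \<in> carrier (E[X]) \<Longrightarrow> ht (eval p a) = eval (map hs p) b"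
    using ring_hom_factor_through[OF UP.ring_axioms ring_axioms ring_axioms eval_a
        eval_map_ring_hom[OF subring hs b(1)]] eval_map_eq_zero_if_Irr_root[OF E hs a b] by blast
  have "ht x = hs x" if x: "x \<in> E" for x
  proof (cases "x = \<zero>")
    case True
    then show ?thesis using ht_eval[OF UP.zero_closed] hs.hom_zero by (simp add: univ_poly_zero)
  next
    case False
    then have "[x] \<in> carrier (E[X])"
      using x unfolding sym[OF univ_poly_carrier] polynomial_def by auto
    then have "ht (eval [x] a) = eval (map hs [x]) b" by (rule ht_eval)
    moreover have "eval [x] a = x" using x subfieldE(3)[OF E] a(1) by auto
    moreover have "eval (map hs [x]) b = hs x" using x b(1) hs.hom_closed by simp
    ultimately show ?thesis by simp
  qed
  moreover have "ht a = b"
    using ht_eval[OF var_closed(1)[OF subring]] eval_var[OF a(1)] hs.hom_one hs.hom_zero b(1)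
    unfolding var_def by simp
  ultimately show thesis
    using that ht simple_extension_as_eval_img[OF subfieldE(3)[OF E] a(1)] by simp
qed

end

lemma (in algebraically_closed) poly_has_root:
  assumes p: "p \<in> carrier (poly_ring L)" and deg: "degree p > 0"
  obtains b where "b \<in> carrier L" "eval p b = \<zero>"
proof -
  have "size (roots p) = degree p" using roots_over_carrier[OF p] unfolding splitted_def .
  then obtain b where "b \<in># roots p" using deg by (metis multiset_nonemptyE size_empty less_irrefl)
  then show thesis using that roots_mem_iff_is_root[OF p] unfolding is_root_def by blast
qed

lemma (in algebraic_closure) finite_extension_hom_extend:
  assumes E: "subfield E L" "K \<subseteq> E" and hs: "hs \<in> ring_hom (L\<lparr>carrier := E\<rparr>) L"
    and ws: "set ws \<subseteq> carrier L"
  obtains ht where "ht \<in> ring_hom (L\<lparr>carrier := finite_extension E ws\<rparr>) L"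
    and "\<And>x. x \<in> E \<Longrightarrow> ht x = hs x"
proof -
  have "\<exists>ht \<in> ring_hom (L\<lparr>carrier := finite_extension E ws\<rparr>) L. \<forall>x\<in>E. ht x = hs x"
    using ws
  proof (induction ws)
    case Nil
    then show ?case using hs by auto
  next
    case (Cons w ws)
    let ?F = "finite_extension E ws"
    have w: "w \<in> carrier L" and ws: "set ws \<subseteq> carrier L" using Cons.prems by auto
    obtain t where t: "t \<in> ring_hom (L\<lparr>carrier := ?F\<rparr>) L" and t_E: "\<And>x. x \<in> E \<Longrightarrow> t x = hs x"
      using Cons.IH[OF ws] by blast
    have alg_E: "(algebraic over E) z" if "z \<in> carrier L" for z
      using algebraic_mono[OF E(2)] algebraic_extension[OF that] by (auto simp: over_def)
    have F: "subfield ?F L" using finite_extension_is_subfield[OF E(1) ws] alg_E ws by auto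
    have E_F: "E \<subseteq> ?F" using finite_extension_incl[OF subfieldE(3)[OF E(1)] ws] .
    have alg_F: "(algebraic over ?F) w"
      using algebraic_mono[OF E_F] alg_E[OF w] by (auto simp: over_def)
    note Irr = IrrE[OF F w alg_F]
    have "Irr ?F w \<in> carrier (poly_ring (L\<lparr>carrier := ?F\<rparr>))"
      using Irr(1) univ_poly_consistent[OF subfieldE(1)[OF F]] by simp
    then have mapped: "map t (Irr ?F w) \<in> carrier (poly_ring L)"
      using polynomial_hom[OF t] subfield_iff(2)[OF F] field_axioms by blast
    have "degree (map t (Irr ?F w)) > 0" using pirreducible_degree[OF F Irr(1,2)] by simp
    then obtain b where b: "b \<in> carrier L" "eval (map t (Irr ?F w)) b = \<zero>"
      using poly_has_root[OF mapped] by blast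
    obtain ht where ht: "ht \<in> ring_hom (L\<lparr>carrier := simple_extension ?F w\<rparr>) L"
      and ht_F: "\<And>x. x \<in> ?F \<Longrightarrow> ht x = t x"
      using simple_extension_hom_extend[OF F t w alg_F b] by blast
    have "finite_extension E (w # ws) = simple_extension ?F w" by simp
    moreover have "\<forall>x\<in>E. ht x = hs x" using ht_F t_E E_F by (simp add: subset_iff)
    ultimately show ?case using ht by (intro bexI[of _ ht]) simp_all
  qed
  then show thesis using that by blast
qed

section \<open>Galois subextensions and the ascending index\<close>

context ring
begin

lemma galois_overI:
  assumes "subfield F R" "K \<subseteq> F"
    and "\<And>x y. x \<in> F \<Longrightarrow> y \<in> carrier R \<Longrightarrow> eval (Irr K x) y = \<zero> \<Longrightarrow> y \<in> F"
    and "\<And>x y. x \<in> F \<Longrightarrow> y \<in> carrier R \<Longrightarrow> alg_mult (Irr K x) y \<le> 1"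
  shows "galois_over K F"
  unfolding galois_over_def
proof (intro conjI ballI impI)
  show "subfield F R" "K \<subseteq> F" by (fact assms(1), fact assms(2))
  show "y \<in> F" if "x \<in> F" "y \<in> carrier R" "eval (Irr K x) y = \<zero>" for x y
    using assms(3) that .
  show "alg_mult (Irr K x) y \<le> 1" if "x \<in> F" "y \<in> carrier R" for x y
    using assms(4) that .
qed

lemma galois_over_subfield: "galois_over K F \<Longrightarrow> subfield F R"
  by (simp add: galois_over_def)

lemma galois_over_incl: "galois_over K F \<Longrightarrow> K \<subseteq> F"
  by (simp add: galois_over_def)

lemma galois_over_normal:
  assumes "galois_over K F" "x \<in> F" "y \<in> carrier R" "eval (Irr K x) y = \<zero>"
  shows "y \<in> F"
proof -
  have "\<forall>x\<in>F. \<forall>y\<in>carrier R. eval (Irr K x) y = \<zero> \<longrightarrow> y \<in> F"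
    using assms(1) by (simp add: galois_over_def)
  with assms(2-4) show ?thesis by blast
qed

end

context field
begin

lemma Irr_of_mem:
  assumes K: "subfield K R" and x: "x \<in> K"
  shows "Irr K x = [\<one>, \<ominus> x]"
proof -
  have x_R: "x \<in> carrier R" using x subfieldE(3)[OF K] by blast
  have lin: "[\<one>, \<ominus> x] \<in> carrier (K[X])"
    using x subfieldE(1,6)[OF K] subringE(3,5)[OF subfieldE(1)[OF K]]
    unfolding sym[OF univ_poly_carrier] polynomial_def by auto
  have "eval [\<one>, \<ominus> x] x = \<zero>" using x_R by (simp, algebra)
  then show ?thesis using Irr_eqI[OF K x_R lin degree_one_imp_pirreducible[OF K lin]] by simp
qed

lemma galois_over_self:
  assumes perfect: "perfect_subfield K" shows "galois_over K K"
proof -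
  have K: "subfield K R" using perfect_subfield_imp_subfield[OF perfect] .
  have x_R: "x \<in> carrier R" if "x \<in> K" for x using that subfieldE(3)[OF K] by blast
  have normal: "y \<in> K" if x: "x \<in> K" and y: "y \<in> carrier R" and root: "eval (Irr K x) y = \<zero>" for x y
  proof -
    have "is_root [\<one>, \<ominus> x] y" using root y unfolding Irr_of_mem[OF K x] is_root_def by simp
    then have "x = y" using monic_degree_one_root_condition[OF x_R[OF x]] by simp
    then show ?thesis using x by simp
  qed
  have separable: "alg_mult (Irr K x) y \<le> 1" if x: "x \<in> K" for x y
    using Irr_separable_if_perfect[OF perfect x_R[OF x] algebraic_self[OF subfieldE(1)[OF K] x]] .
  show ?thesis using galois_overI[OF K order_refl normal separable] .
qed

lemma finite_dims_galois_subfields: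
  assumes K: "subfield K R" and P: "subring P R" and fd: "finite_dimension K P"
  shows "finite {dim K F | F. F \<subseteq> P \<and> galois_over K F}"
proof (rule finite_subset)
  show "{dim K F | F. F \<subseteq> P \<and> galois_over K F} \<subseteq> {..dim K P}"
  proof
    fix d assume "d \<in> {dim K F | F. F \<subseteq> P \<and> galois_over K F}"
    then obtain F where F: "d = dim K F" "F \<subseteq> P" "galois_over K F" by blast
    then show "d \<in> {..dim K P}"
      using dim_mono[OF K galois_over_subfield[OF F(3)] P galois_over_incl[OF F(3)] F(2) fd] by simp
  qed
qed simp

lemma dim_le_ascending_index:
  assumes K: "subfield K R" and P: "subring P R" and fd: "finite_dimension K P"
    and F: "F \<subseteq> P" "galois_over K F"
  shows "dim K F \<le> ascending_index K P"
proof -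
  have "dim K F \<in> {dim K F | F. F \<subseteq> P \<and> galois_over K F}" using F by blast
  then show ?thesis
    unfolding ascending_index_def by (rule Max_ge[OF finite_dims_galois_subfields[OF K P fd]])
qed

lemma ascending_index_attained:
  assumes perfect: "perfect_subfield K" and P: "subring P R" "K \<subseteq> P" and fd: "finite_dimension K P"
  obtains F where "F \<subseteq> P" "galois_over K F" "dim K F = ascending_index K P"
proof -
  let ?dims = "{dim K F | F. F \<subseteq> P \<and> galois_over K F}"
  have "dim K K \<in> ?dims" using galois_over_self[OF perfect] P(2) by blast
  then have "Max ?dims \<in> ?dims"
    using Max_in[OF finite_dims_galois_subfields[OF perfect_subfield_imp_subfield[OF perfect] P(1) fd]]
    by blast
  then obtain F where "F \<subseteq> P" "galois_over K F" "dim K F = ascending_index K P"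
    unfolding ascending_index_def by auto
  then show thesis by (rule that)
qed

end

lemma (in ring) eval_hom_fixing_coeffs:
  assumes D: "subring D R" and h: "h \<in> ring_hom (R\<lparr>carrier := D\<rparr>) R"
    and p: "set p \<subseteq> D" "\<And>c. c \<in> set p \<Longrightarrow> h c = c" and u: "u \<in> D"
  shows "h (eval p u) = eval p (h u)"
proof -
  interpret h: ring_hom_ring "R\<lparr>carrier := D\<rparr>" R h
    using ring_hom_ringI2[OF subring_is_ring[OF D] ring_axioms h] .
  have "map h p = p" using p(2) by (simp add: map_idI)
  then show ?thesis using h.eval_hom'[of u p] eval_consistent[OF D] p(1) u by simp
qed

lemma (in ring) subring_hom_a_inv:
  assumes D: "subring D R" and h: "h \<in> ring_hom (R\<lparr>carrier := D\<rparr>) R" and a: "a \<in> D"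
  shows "h (\<ominus> a) = \<ominus> h a"
proof -
  interpret h: ring_hom_ring "R\<lparr>carrier := D\<rparr>" R h
    using ring_hom_ringI2[OF subring_is_ring[OF D] ring_axioms h] .
  have neg_a: "\<ominus> a \<in> D" using subringE(5)[OF D a] .
  have "h (\<ominus> a) \<oplus> h a = h (\<ominus> a \<oplus> a)" using h.hom_add[of "\<ominus> a" a] neg_a a by simp
  also have "\<dots> = \<zero>" using a subringE(1)[OF D] h.hom_zero by (simp add: l_neg subset_iff)
  finally show ?thesis using h.hom_closed a neg_a by (simp add: minus_equality)
qed

lemma (in domain) finite_extension_hom_image_subset:
  assumes K: "subring K R" and ws: "set ws \<subseteq> carrier R"
    and D: "subring D R" "finite_extension K ws \<subseteq> D" and h: "h \<in> ring_hom (R\<lparr>carrier := D\<rparr>) R"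
    and h_K: "\<And>k. k \<in> K \<Longrightarrow> h k = k" and h_ws: "\<And>w. w \<in> set ws \<Longrightarrow> h w \<in> finite_extension K ws"
  shows "h ` finite_extension K ws \<subseteq> finite_extension K ws"
proof -
  define G where "G = finite_extension K ws"
  interpret h: ring_hom_ring "R\<lparr>carrier := D\<rparr>" R h
    using ring_hom_ringI2[OF subring_is_ring[OF D(1)] ring_axioms h] .
  have G: "subring G R" unfolding G_def using finite_extension_is_subring[OF K ws] .
  have G_D: "a \<in> D" if "a \<in> G" for a using that D(2) unfolding G_def by blast
  define S where "S = {z \<in> G. h z \<in> G}"
  have "subring S R"
  proof (rule subringI)
    show "S \<subseteq> carrier R" unfolding S_def using subringE(1)[OF G] by blast
    show "\<one> \<in> S" unfolding S_def using subringE(3)[OF G] h.hom_one by simp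
    show "\<ominus> a \<in> S" if "a \<in> S" for a
      using that subringE(5)[OF G] G_D subring_hom_a_inv[OF D(1) h] unfolding S_def by auto
    show "a \<otimes> b \<in> S" "a \<oplus> b \<in> S" if "a \<in> S" "b \<in> S" for a b
      using that subringE(6,7)[OF G] G_D h.hom_mult h.hom_add unfolding S_def by auto
  qed
  moreover have "K \<subseteq> S"
    unfolding S_def G_def using finite_extension_incl[OF subringE(1)[OF K] ws] h_K by auto
  moreover have "set ws \<subseteq> S"
    unfolding S_def G_def using finite_extension_mem[OF K ws] h_ws by auto
  ultimately have "G \<subseteq> S" unfolding G_def using finite_extension_subring_incl by blast
  then show ?thesis unfolding S_def G_def by blast
qed

context algebraic_closure
begin

lemma galois_over_hom_image_subset:
  assumes D: "subring D L" "K \<subseteq> D" and h: "h \<in> ring_hom (L\<lparr>carrier := D\<rparr>) L"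
    and h_K: "\<And>k. k \<in> K \<Longrightarrow> h k = k" and F: "galois_over K F" "F \<subseteq> D"
  shows "h ` F \<subseteq> F"
proof
  interpret h: ring_hom_ring "L\<lparr>carrier := D\<rparr>" L h
    using ring_hom_ringI2[OF subring_is_ring[OF D(1)] ring_axioms h] .
  fix y assume "y \<in> h ` F"
  then obtain u where u: "u \<in> F" and y: "y = h u" by blast
  have u_D: "u \<in> D" and u_L: "u \<in> carrier L" using u F(2) subringE(1)[OF D(1)] by auto
  note Irr = IrrE[OF subfield_axioms u_L algebraic_extension[OF u_L]]
  have coeffs: "set (Irr K u) \<subseteq> K" using set_Irr_subset[OF subfield_axioms u_L algebraic_extension[OF u_L]] .
  have "h (eval (Irr K u) u) = eval (Irr K u) (h u)"
    by (rule eval_hom_fixing_coeffs[OF D(1) h _ _ u_D]) (use coeffs D(2) h_K in auto)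
  then have "eval (Irr K u) y = \<zero>" using Irr(4) y h.hom_zero by simp
  moreover have "y \<in> carrier L" using y u_D h.hom_closed by simp
  ultimately show "y \<in> F" using galois_over_normal[OF F(1) u] by blast
qed

lemma finite_extension_normal:
  assumes ws: "set ws \<subseteq> carrier L"
    and gen: "\<And>w. w \<in> set ws \<Longrightarrow> \<exists>F. galois_over K F \<and> w \<in> F \<and> F \<subseteq> finite_extension K ws"
    and x: "x \<in> finite_extension K ws" and y: "y \<in> carrier L" and root: "eval (Irr K x) y = \<zero>"
  shows "y \<in> finite_extension K ws"
proof -
  txt \<open>Extend the embedding \<open>x \<mapsto> y\<close> of \<open>K(x)\<close> to \<open>K(x)(ws)\<close>, which contains \<open>G\<close>. It maps
    every generator into a normal subfield of \<open>G\<close>, hence \<open>G\<close> into itself.\<close>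
  define G where "G = finite_extension K ws"
  have K_L: "K \<subseteq> carrier L" using subfieldE(3)[OF subfield_axioms] .
  have x_L: "x \<in> carrier L" using x finite_extension_in_carrier[OF K_L ws] by blast
  have incl: "(\<lambda>z. z) \<in> ring_hom (L\<lparr>carrier := K\<rparr>) L" by (rule ring_hom_memI) (use K_L in auto)
  have "eval (map (\<lambda>z. z) (Irr K x)) y = \<zero>" using root by simp
  then obtain t where t: "t \<in> ring_hom (L\<lparr>carrier := simple_extension K x\<rparr>) L"
    and t_K: "\<And>k. k \<in> K \<Longrightarrow> t k = k" and t_x: "t x = y"
    using simple_extension_hom_extend[OF subfield_axioms incl x_L algebraic_extension[OF x_L] y]
    by blast
  define E where "E = simple_extension K x"
  have E: "subfield E L" "K \<subseteq> E"
    unfolding E_def using simple_extension_is_subfield[OF subfield_axioms x_L] algebraic_extension[OF x_L]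
      simple_extension_incl[OF K_L x_L] by auto
  obtain h where h: "h \<in> ring_hom (L\<lparr>carrier := finite_extension E ws\<rparr>) L"
    and h_E: "\<And>z. z \<in> E \<Longrightarrow> h z = t z"
    using finite_extension_hom_extend[OF E t[folded E_def] ws] by blast
  define D where "D = finite_extension E ws"
  have D: "subring D L" unfolding D_def using finite_extension_is_subring[OF subfieldE(1)[OF E(1)] ws] .
  have G_D: "G \<subseteq> D" unfolding G_def D_def using mono_finite_extension[OF E(2)] .
  have K_G: "K \<subseteq> G" unfolding G_def using finite_extension_incl[OF K_L ws] .
  have h_K: "h k = k" if "k \<in> K" for k using that h_E t_K E(2) by auto
  have "h w \<in> G" if w: "w \<in> set ws" for w
  proof -
    obtain F where F: "galois_over K F" "w \<in> F" "F \<subseteq> G" using gen[OF w] unfolding G_def by blast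
    then have "h ` F \<subseteq> F"
      using galois_over_hom_image_subset[OF D _ h[folded D_def] h_K] K_G G_D by blast
    then show ?thesis using F by blast
  qed
  then have "h ` G \<subseteq> G"
    using finite_extension_hom_image_subset[OF subfieldE(1)[OF subfield_axioms] ws D _ h[folded D_def] h_K]
      G_D unfolding G_def by blast
  moreover have "h x = y" using h_E t_x simple_extension_mem[OF subfieldE(1)[OF subfield_axioms] x_L]
    unfolding E_def by simp
  ultimately show ?thesis using x unfolding G_def by blast
qed

lemma galois_compositum:
  assumes perfect: "perfect_subfield K"
    and F1: "galois_over K F1" "finite_dimension K F1" and F2: "galois_over K F2" "finite_dimension K F2"
    and M: "subfield M L" "F1 \<subseteq> M" "F2 \<subseteq> M"
  obtains G where "galois_over K G" "F1 \<subseteq> G" "F2 \<subseteq> G" "G \<subseteq> M"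
proof -
  obtain us where us: "set us \<subseteq> F1" "\<And>G. subring G L \<Longrightarrow> K \<subseteq> G \<Longrightarrow> set us \<subseteq> G \<Longrightarrow> F1 \<subseteq> G"
    using finite_dimension_generators[OF subfield_axioms F1(2)] by blast
  obtain vs where vs: "set vs \<subseteq> F2" "\<And>G. subring G L \<Longrightarrow> K \<subseteq> G \<Longrightarrow> set vs \<subseteq> G \<Longrightarrow> F2 \<subseteq> G"
    using finite_dimension_generators[OF subfield_axioms F2(2)] by blast
  define ws where "ws = us @ vs"
  have ws_M: "set ws \<subseteq> M" using us(1) vs(1) M(2,3) unfolding ws_def by auto
  then have ws: "set ws \<subseteq> carrier L" using subfieldE(3)[OF M(1)] by blast
  define G where "G = finite_extension K ws"
  have G: "subfield G L"
    unfolding G_def using finite_extension_is_subfield[OF subfield_axioms ws] algebraic_extension ws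
    by blast
  have K_G: "K \<subseteq> G" unfolding G_def using finite_extension_incl[OF subfieldE(3)[OF subfield_axioms] ws] .
  have ws_G: "set ws \<subseteq> G"
    unfolding G_def using finite_extension_mem[OF subfieldE(1)[OF subfield_axioms] ws] .
  have F1_G: "F1 \<subseteq> G" using us(2)[OF subfieldE(1)[OF G] K_G] ws_G unfolding ws_def by simp
  have F2_G: "F2 \<subseteq> G" using vs(2)[OF subfieldE(1)[OF G] K_G] ws_G unfolding ws_def by simp
  have G_M: "G \<subseteq> M"
    unfolding G_def using finite_extension_subring_incl[OF subfieldE(1)[OF M(1)] _ ws_M]
      galois_over_incl[OF F1(1)] M(2) by blast
  have "galois_over K G"
  proof (rule galois_overI[OF G K_G])
    show "y \<in> G" if "x \<in> G" "y \<in> carrier L" "eval (Irr K x) y = \<zero>" for x y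
    proof -
      have "\<exists>F. galois_over K F \<and> w \<in> F \<and> F \<subseteq> G" if "w \<in> set ws" for w
        using that us(1) vs(1) F1(1) F2(1) F1_G F2_G unfolding ws_def by auto
      then show ?thesis using finite_extension_normal[OF ws] that unfolding G_def by blast
    qed
    show "alg_mult (Irr K x) y \<le> 1" if "x \<in> G" "y \<in> carrier L" for x y
      using Irr_separable_if_perfect[OF perfect _ algebraic_extension] that subfieldE(3)[OF G] by blast
  qed
  then show thesis using that F1_G F2_G G_M by blast
qed

lemma ascending_index_dvd:
  assumes perfect: "perfect_subfield K"
    and P: "subfield P L" "K \<subseteq> P" "finite_dimension K P"
    and Q: "subfield Q L" "P \<subseteq> Q" "finite_dimension K Q"
  shows "ascending_index K P dvd ascending_index K Q"
proof -
  have K_Q: "K \<subseteq> Q" using P(2) Q(2) by blast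
  obtain FP where FP: "FP \<subseteq> P" "galois_over K FP" "dim K FP = ascending_index K P"
    using ascending_index_attained[OF perfect subfieldE(1)[OF P(1)] P(2,3)] by blast
  obtain FQ where FQ: "FQ \<subseteq> Q" "galois_over K FQ" "dim K FQ = ascending_index K Q"
    using ascending_index_attained[OF perfect subfieldE(1)[OF Q(1)] K_Q Q(3)] by blast
  have fd_FP: "finite_dimension K FP"
    using dim_tower(1)[OF subfield_axioms galois_over_subfield[OF FP(2)] subfieldE(1)[OF P(1)]
        galois_over_incl[OF FP(2)] FP(1) P(3)] .
  have fd_FQ: "finite_dimension K FQ"
    using dim_tower(1)[OF subfield_axioms galois_over_subfield[OF FQ(2)] subfieldE(1)[OF Q(1)]
        galois_over_incl[OF FQ(2)] FQ(1) Q(3)] .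
  obtain G where G: "galois_over K G" "FP \<subseteq> G" "FQ \<subseteq> G" "G \<subseteq> Q"
    using galois_compositum[OF perfect FP(2) fd_FP FQ(2) fd_FQ Q(1)] FP(1) Q(2) FQ(1) by blast
  note G_field = galois_over_subfield[OF G(1)] galois_over_incl[OF G(1)]
  note tower = dim_tower[OF subfield_axioms G_field(1) subfieldE(1)[OF Q(1)] G_field(2) G(4) Q(3)]
  have "dim K G \<le> ascending_index K Q"
    using dim_le_ascending_index[OF subfield_axioms subfieldE(1)[OF Q(1)] Q(3) G(4,1)] .
  moreover have "ascending_index K Q \<le> dim K G"
    using dim_mono[OF subfield_axioms galois_over_subfield[OF FQ(2)] subfieldE(1)[OF G_field(1)]
        galois_over_incl[OF FQ(2)] G(3) tower(1)] FQ(3) by simp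
  moreover have "dim K G = dim K FP * dim FP G"
    using dim_tower(3)[OF subfield_axioms galois_over_subfield[OF FP(2)] subfieldE(1)[OF G_field(1)]
        galois_over_incl[OF FP(2)] G(2) tower(1)] .
  ultimately show ?thesis using FP(3) by simp
qed

end

theorem proposition9p1:
  fixes R :: "('a, 'b) ring_scheme" and K L M :: "'a set"
  assumes "algebraic_closure R K"
    and "ring.perfect_subfield R K"
    and "subfield L R" and "subfield M R"
    and "K \<subseteq> L" and "L \<subseteq> M"
    and "ring.finite_dimension R K L" and "ring.finite_dimension R K M"
  shows "ring.ascending_index R K L dvd ring.ascending_index R K M"
proof -
  interpret algebraic_closure R K by fact
  show ?thesis using ascending_index_dvd assms(2-8) by blast
qed

end
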